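(* There is an absolute constant $K$ such that for all $0<p<q<1/2$, \[ \left|\frac{H_p(q)}{p\,h\!\left(\frac qp-1\right)}-1\right|\le K\,(p+q). \]
   Context: $H_p(q)=q\log\frac qp+(1-q)\log\frac{1-q}{1-p}$ is the Kullback–Leibler divergence between $\mathrm{Bern}(q)$ and $\mathrm{Bern}(p)$, and $h(x)=(x+1)\log(x+1)-x$. The paper states the bound as $O(p+q)$ with $p,q$ possibly depending on $n$. *)

theory Defs
  imports Complex_Main
begin

definition KL_bern :: "real \<Rightarrow> real \<Rightarrow> real" where
  "KL_bern p q = q * ln (q / p) + (1 - q) * ln ((1 - q) / (1 - p))"

definition hfun :: "real \<Rightarrow> real" where
  "hfun x = (x + 1) * ln (x + 1) - x"

end

theory Submission
  imports Defs
begin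

text \<open>Writing \<open>A = p h(q/p - 1)\<close> and \<open>D = (1 - p) h((1 - q)/(1 - p) - 1)\<close>, the divergence
  splits as \<open>H\<^sub>p(q) = A + D\<close>, so the quantity to bound is \<open>D / A\<close>. Since \<open>h(x)\<close> lies between
  \<open>x\<^sup>2/(x + 2)\<close> (for \<open>x \<ge> 0\<close>) and \<open>x\<^sup>2\<close>, we get \<open>A \<ge> (q - p)\<^sup>2/(q + p)\<close> and
  \<open>0 \<le> D \<le> (q - p)\<^sup>2/(1 - p) \<le> 2 (q - p)\<^sup>2\<close>, hence \<open>0 \<le> D / A \<le> 2 (p + q)\<close>.\<close>

lemma ln_add_one_ge_two_mult_div:
  fixes x :: real
  assumes "0 \<le> x"
  shows "2 * x / (x + 2) \<le> ln (x + 1)"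
proof -
  let ?f = "\<lambda>t::real. ln (t + 1) - 2 * t / (t + 2)"
  have "?f 0 \<le> ?f x"
  proof (rule DERIV_nonneg_imp_nondecreasing[OF assms])
    fix t :: real
    assume "0 \<le> t"
    then have "(?f has_real_derivative 1 / (t + 1) - 4 / (t + 2)\<^sup>2) (at t)"
      by (auto intro!: derivative_eq_intros simp: field_simps power2_eq_square)
    moreover have "0 \<le> 1 / (t + 1) - 4 / (t + 2)\<^sup>2"
    proof -
      have "0 \<le> t\<^sup>2 / ((t + 1) * (t + 2)\<^sup>2)"
        using \<open>0 \<le> t\<close> by simp
      also have "\<dots> = 1 / (t + 1) - 4 / (t + 2)\<^sup>2"
        using \<open>0 \<le> t\<close> by (simp add: field_simps) (simp add: algebra_simps power2_eq_square)
      finally show ?thesis .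
    qed
    ultimately show "\<exists>y. (?f has_real_derivative y) (at t) \<and> y \<ge> 0"
      by blast
  qed
  then show ?thesis
    by simp
qed

lemma hfun_nonneg:
  assumes "-1 < x"
  shows "0 \<le> hfun x"
proof -
  have "1 - 1 / (x + 1) \<le> ln (x + 1)"
    using ln_le_minus_one[of "1 / (x + 1)"] assms by (simp add: ln_div)
  then have "(x + 1) * (1 - 1 / (x + 1)) \<le> (x + 1) * ln (x + 1)"
    using assms by (intro mult_left_mono) auto
  moreover have "(x + 1) * (1 - 1 / (x + 1)) = x"
    using assms by (simp add: field_simps)
  ultimately show ?thesis
    by (simp add: hfun_def)
qed

lemma hfun_le_square:
  assumes "-1 < x"
  shows "hfun x \<le> x\<^sup>2"
proof -
  have "(x + 1) * ln (x + 1) \<le> (x + 1) * x"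
    using ln_le_minus_one[of "x + 1"] assms by (intro mult_left_mono) auto
  then show ?thesis
    by (simp add: hfun_def power2_eq_square algebra_simps)
qed

lemma square_div_add_two_le_hfun:
  assumes "0 \<le> x"
  shows "x\<^sup>2 / (x + 2) \<le> hfun x"
proof -
  have "(x + 1) * (2 * x / (x + 2)) \<le> (x + 1) * ln (x + 1)"
    using ln_add_one_ge_two_mult_div[OF assms] assms by (intro mult_left_mono) auto
  moreover have "(x + 1) * (2 * x / (x + 2)) - x = x\<^sup>2 / (x + 2)"
    using assms by (simp add: field_simps power2_eq_square)
  ultimately show ?thesis
    by (simp add: hfun_def)
qed

lemma mult_hfun_eq:
  fixes a b :: real
  assumes "0 < a"
  shows "a * hfun (b / a - 1) = b * ln (b / a) - b + a"
  using assms by (simp add: hfun_def field_simps)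

lemma KL_bern_eq_hfun:
  assumes "0 < p" "p < 1"
  shows "KL_bern p q = p * hfun (q / p - 1) + (1 - p) * hfun ((1 - q) / (1 - p) - 1)"
  using assms by (simp add: KL_bern_def mult_hfun_eq)

lemma mult_hfun_ge:
  fixes a b :: real
  assumes "0 < a" "a \<le> b"
  shows "(b - a)\<^sup>2 / (a + b) \<le> a * hfun (b / a - 1)"
proof -
  have "b / a - 1 = (b - a) / a" "b / a - 1 + 2 = (a + b) / a"
    using assms by (simp_all add: field_simps)
  then have "(b - a)\<^sup>2 / (a + b) = a * ((b / a - 1)\<^sup>2 / (b / a - 1 + 2))"
    using assms by (simp add: power2_eq_square)
  also have "\<dots> \<le> a * hfun (b / a - 1)"
    using assms by (intro mult_left_mono square_div_add_two_le_hfun) auto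
  finally show ?thesis .
qed

lemma mult_hfun_le:
  fixes a b :: real
  assumes "0 < a" "0 < b"
  shows "a * hfun (b / a - 1) \<le> (b - a)\<^sup>2 / a"
proof -
  have "a * hfun (b / a - 1) \<le> a * (b / a - 1)\<^sup>2"
    using assms by (intro mult_left_mono hfun_le_square) auto
  also have "a * (b / a - 1)\<^sup>2 = (b - a)\<^sup>2 / a"
    using assms by (simp add: field_simps power2_eq_square)
  finally show ?thesis .
qed

theorem lemma5:
  shows "\<exists>K::real. \<forall>p q :: real. 0 < p \<and> p < q \<and> q < 1/2 \<longrightarrow>
           \<bar>KL_bern p q / (p * hfun (q / p - 1)) - 1\<bar> \<le> K * (p + q)"
proof (intro exI[of _ 2] allI impI)
  fix p q :: real
  assume "0 < p \<and> p < q \<and> q < 1/2"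
  then have p: "0 < p" and pq: "p < q" and q: "q < 1/2"
    by auto
  define A where "A = p * hfun (q / p - 1)"
  define D where "D = (1 - p) * hfun ((1 - q) / (1 - p) - 1)"
  have A_ge: "(q - p)\<^sup>2 / (p + q) \<le> A"
    unfolding A_def using p pq by (intro mult_hfun_ge) auto
  moreover have "0 < (q - p)\<^sup>2 / (p + q)"
    using p pq by simp
  ultimately have "0 < A"
    by linarith
  have "0 \<le> D"
    unfolding D_def using p pq q by (intro mult_nonneg_nonneg hfun_nonneg) auto
  have "D \<le> (q - p)\<^sup>2 / (1 - p)"
    using mult_hfun_le[of "1 - p" "1 - q"] pq q by (simp add: D_def power2_commute)
  also have "\<dots> \<le> (q - p)\<^sup>2 / (1 / 2)"
    using p pq q by (intro divide_left_mono) auto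
  also have "\<dots> = 2 * (q - p)\<^sup>2"
    by simp
  also have "\<dots> \<le> 2 * (p + q) * A"
    using A_ge p pq by (simp add: field_simps)
  finally have "D / A \<le> 2 * (p + q)"
    using \<open>0 < A\<close> by (simp add: divide_le_eq)
  moreover have "KL_bern p q = A + D"
    unfolding A_def D_def using p pq q by (intro KL_bern_eq_hfun) auto
  ultimately show "\<bar>KL_bern p q / (p * hfun (q / p - 1)) - 1\<bar> \<le> 2 * (p + q)"
    unfolding A_def[symmetric] using \<open>0 \<le> D\<close> \<open>0 < A\<close> by (simp add: field_simps)
qed

end
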